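(* There is an SOS refutation of $Q_n$ of degree $2$ and monomial-size polynomial in $n$.
   Context: For $i\in[n]$, $j\in[2n]$ there are twin variable pairs $x_{ij},\bar x_{ij}$; $\mathrm{ks}_i=\sum_{j\in[2n]}x_{ij}-n$. $Q_n$ consists of: $\mathrm{ks}_1-1/2=0$; $\mathrm{ks}_i^2-\mathrm{ks}_{i+1}=0$ for $i\in[n-1]$; $\mathrm{ks}_n^2=0$. An SOS refutation of $Q$ is an identity $-1=\sum_i r_i^2+\sum_{q\in Q}t_q q+\sum(u(x^2-x)+v(x+\bar x-1))$ over twin pairs, with real polynomials; its degree is the maximum degree of the terms $r_i^2$, $t_q q$, $u(x^2-x)$, $v(x+\bar x-1)$; its monomial-size is the number of explicit monomials counted with multiplicity, where explicit monomials are all monomials appearing in the $r_i$, $t_q$, $q$, $u$, $v$, and the logical axioms. *)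

theory Defs
  imports Complex_Main "HOL-Library.Poly_Mapping"
begin

datatype var = X nat nat | XB nat nat

type_synonym mono = "var \<Rightarrow>\<^sub>0 nat"
type_synonym mpoly = "mono \<Rightarrow>\<^sub>0 real"

definition const :: "real \<Rightarrow> mpoly" where
  "const c = Poly_Mapping.single 0 c"

definition pvar :: "var \<Rightarrow> mpoly" where
  "pvar v = Poly_Mapping.single (Poly_Mapping.single v 1) 1"

definition mono_deg :: "mono \<Rightarrow> nat" where
  "mono_deg m = (\<Sum>v\<in>Poly_Mapping.keys m. Poly_Mapping.lookup m v)"

text \<open>Total degree (degree of the zero polynomial taken to be 0).\<close>
definition tdeg :: "mpoly \<Rightarrow> nat" where
  "tdeg p = Max (insert 0 (mono_deg ` Poly_Mapping.keys p))"

definition nmon :: "mpoly \<Rightarrow> nat" where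
  "nmon p = card (Poly_Mapping.keys p)"

definition ks :: "nat \<Rightarrow> nat \<Rightarrow> mpoly" where
  "ks n i = (\<Sum>j\<in>{1..2*n}. pvar (X i j)) - const (real n)"

text \<open>The system Q_n, as a list of polynomials (each asserted = 0).\<close>
definition Qn :: "nat \<Rightarrow> mpoly list" where
  "Qn n = [ks n 1 - const (1/2)]
          @ map (\<lambda>i. ks n i * ks n i - ks n (Suc i)) [1..<n]
          @ [ks n n * ks n n]"

definition pairs :: "nat \<Rightarrow> (nat \<times> nat) set" where
  "pairs n = {1..n} \<times> {1..2*n}"

definition ax_x :: "nat \<Rightarrow> nat \<Rightarrow> mpoly" where
  "ax_x i j = pvar (X i j) * pvar (X i j) - pvar (X i j)"
definition ax_xb :: "nat \<Rightarrow> nat \<Rightarrow> mpoly" where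
  "ax_xb i j = pvar (XB i j) * pvar (XB i j) - pvar (XB i j)"
definition ax_c :: "nat \<Rightarrow> nat \<Rightarrow> mpoly" where
  "ax_c i j = pvar (X i j) + pvar (XB i j) - const 1"

text \<open>An SOS refutation of Q_n: squares rs, multipliers t (indexed by position in Qn),
  multipliers u, ub, w of the logical axioms.\<close>
definition sos_refutation ::
  "nat \<Rightarrow> mpoly list \<Rightarrow> (nat \<Rightarrow> mpoly) \<Rightarrow> (nat \<Rightarrow> nat \<Rightarrow> mpoly)
     \<Rightarrow> (nat \<Rightarrow> nat \<Rightarrow> mpoly) \<Rightarrow> (nat \<Rightarrow> nat \<Rightarrow> mpoly) \<Rightarrow> bool" where
  "sos_refutation n rs t u ub w \<longleftrightarrow>
     - const 1 = sum_list (map (\<lambda>r. r * r) rs)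
       + (\<Sum>k<length (Qn n). t k * Qn n ! k)
       + (\<Sum>(i,j)\<in>pairs n. u i j * ax_x i j + ub i j * ax_xb i j + w i j * ax_c i j)"

definition sos_degree ::
  "nat \<Rightarrow> mpoly list \<Rightarrow> (nat \<Rightarrow> mpoly) \<Rightarrow> (nat \<Rightarrow> nat \<Rightarrow> mpoly)
     \<Rightarrow> (nat \<Rightarrow> nat \<Rightarrow> mpoly) \<Rightarrow> (nat \<Rightarrow> nat \<Rightarrow> mpoly) \<Rightarrow> nat" where
  "sos_degree n rs t u ub w =
     Max ({0} \<union> (\<lambda>r. tdeg (r * r)) ` set rs
         \<union> (\<lambda>k. tdeg (t k * Qn n ! k)) ` {..<length (Qn n)}
         \<union> (\<lambda>(i,j). tdeg (u i j * ax_x i j)) ` pairs n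
         \<union> (\<lambda>(i,j). tdeg (ub i j * ax_xb i j)) ` pairs n
         \<union> (\<lambda>(i,j). tdeg (w i j * ax_c i j)) ` pairs n)"

definition sos_size ::
  "nat \<Rightarrow> mpoly list \<Rightarrow> (nat \<Rightarrow> mpoly) \<Rightarrow> (nat \<Rightarrow> nat \<Rightarrow> mpoly)
     \<Rightarrow> (nat \<Rightarrow> nat \<Rightarrow> mpoly) \<Rightarrow> (nat \<Rightarrow> nat \<Rightarrow> mpoly) \<Rightarrow> nat" where
  "sos_size n rs t u ub w =
     sum_list (map nmon rs)
     + (\<Sum>k<length (Qn n). nmon (t k) + nmon (Qn n ! k))
     + (\<Sum>(i,j)\<in>pairs n. nmon (u i j) + nmon (ax_x i j) + nmon (ub i j) + nmon (ax_xb i j)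
                          + nmon (w i j) + nmon (ax_c i j))"

end

theory Submission
  imports Defs
begin

text \<open>Over the reals the axioms alone are contradictory: they force \<open>ks_1 = 1/2\<close> and
  \<open>ks_(i+1) = ks_i^2\<close>, so \<open>ks_n = 2^(-2^(n-1))\<close> cannot have square 0. The refutation makes this
  quantitative by completing squares. With weights \<open>P_0 = 1\<close>, \<open>P_i = 2^i P_(i-1)^2\<close> and
  centres \<open>b_i = P_(i-1) / (2 P_i)\<close>, the linear term \<open>-2 P_i b_i ks_i\<close> of \<open>P_i (ks_i - b_i)^2\<close>
  equals \<open>-P_(i-1) ks_i\<close>, the term contributed by the previous axiom \<open>ks_(i-1)^2 - ks_i\<close> taken
  with weight \<open>P_(i-1)\<close>. Hence the weighted squares sum to a combination of the axioms plus
  the constant \<open>\<Sum> P_i b_i^2 = 1/4 - 2^(-n)/4\<close>, and the further constant square \<open>2^(-n)\<close>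
  brings the total to \<open>-1\<close>.\<close>

subsection \<open>Degree and monomial count\<close>

definition deg_le :: "nat \<Rightarrow> mpoly \<Rightarrow> bool" where
  "deg_le k p \<longleftrightarrow> (\<forall>m\<in>Poly_Mapping.keys p. mono_deg m \<le> k)"

lemma mono_deg_add: "mono_deg (a + b) = mono_deg a + mono_deg b"
  unfolding mono_deg_def
  by (rule setsum_keys_plus_distrib[where f="\<lambda>k v. v"]) (auto simp: lookup_add)

lemma tdeg_le_if_deg_le: "deg_le k p \<Longrightarrow> tdeg p \<le> k"
  unfolding tdeg_def deg_le_def by (auto intro!: Max.boundedI)

lemma deg_le_mono: "deg_le k p \<Longrightarrow> k \<le> l \<Longrightarrow> deg_le l p"
  unfolding deg_le_def by force

lemma deg_le_zero: "deg_le k 0"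
  unfolding deg_le_def by simp

lemma deg_le_const: "deg_le k (const c)"
  unfolding deg_le_def const_def by (simp add: mono_deg_def)

lemma deg_le_pvar: "deg_le 1 (pvar v)"
  unfolding deg_le_def pvar_def by (simp add: mono_deg_def)

lemma deg_le_add: "deg_le k p \<Longrightarrow> deg_le k q \<Longrightarrow> deg_le k (p + q)"
  unfolding deg_le_def using keys_add[of p q] by blast

lemma deg_le_diff: "deg_le k p \<Longrightarrow> deg_le k q \<Longrightarrow> deg_le k (p - q)"
  unfolding deg_le_def using keys_diff[of p q] by blast

lemma deg_le_mult: "deg_le k p \<Longrightarrow> deg_le l q \<Longrightarrow> deg_le (k + l) (p * q)"
  unfolding deg_le_def using keys_mult[of p q] by (force simp: mono_deg_add intro: add_mono)

lemma tdeg_mult_le: "deg_le k p \<Longrightarrow> deg_le l q \<Longrightarrow> tdeg (p * q) \<le> k + l"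
  by (intro tdeg_le_if_deg_le deg_le_mult)

lemma deg_le_sum: "(\<And>i. i \<in> A \<Longrightarrow> deg_le k (f i)) \<Longrightarrow> deg_le k (sum f A)"
  by (induction A rule: infinite_finite_induct) (auto simp: deg_le_zero deg_le_add)

lemma nmon_zero: "nmon 0 = 0"
  unfolding nmon_def by simp

lemma nmon_const_le: "nmon (const c) \<le> 1"
  unfolding nmon_def const_def by simp

lemma nmon_pvar_le: "nmon (pvar v) \<le> 1"
  unfolding nmon_def pvar_def by simp

lemma nmon_add_le: "nmon (p + q) \<le> nmon p + nmon q"
  unfolding nmon_def by (meson card_Un_le card_mono finite_UnI finite_keys keys_add le_trans)

lemma nmon_diff_le: "nmon (p - q) \<le> nmon p + nmon q"
  unfolding nmon_def by (meson card_Un_le card_mono finite_UnI finite_keys keys_diff le_trans)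

lemma nmon_mult_le: "nmon (p * q) \<le> nmon p * nmon q"
proof -
  let ?K = "Poly_Mapping.keys p \<times> Poly_Mapping.keys q"
  have "Poly_Mapping.keys (p * q) \<subseteq> (\<lambda>(a, b). a + b) ` ?K"
    using keys_mult[of p q] by auto
  then have "card (Poly_Mapping.keys (p * q)) \<le> card ((\<lambda>(a, b). a + b) ` ?K)"
    by (intro card_mono) auto
  also have "\<dots> \<le> card ?K"
    by (rule card_image_le) auto
  finally show ?thesis
    unfolding nmon_def by (simp add: card_cartesian_product)
qed

lemma nmon_sum_le: "nmon (sum f A) \<le> (\<Sum>i\<in>A. nmon (f i))"
  by (induction A rule: infinite_finite_induct)
    (auto simp: nmon_zero intro: order_trans[OF nmon_add_le])

lemma const_add: "const (a + b) = const a + const b"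
  unfolding const_def by (simp add: single_add)

lemma const_diff: "const (a - b) = const a - const b"
  unfolding const_def by (simp add: single_diff)

lemma const_uminus: "const (- a) = - const a"
  unfolding const_def by (simp add: single_uminus)

lemma const_mult: "const (a * b) = const a * const b"
  unfolding const_def by (simp add: mult_single)

lemma const_numeral: "const (numeral k) = numeral k"
  unfolding const_def by simp

lemma const_1: "const 1 = 1"
  unfolding const_def by simp

lemma const_sum: "const (sum f A) = (\<Sum>a\<in>A. const (f a))"
  by (induction A rule: infinite_finite_induct) (auto simp: const_add const_def[of 0])

lemma ks_deg_le: "deg_le 1 (ks n i)"
  unfolding ks_def by (intro deg_le_diff deg_le_sum deg_le_pvar deg_le_const)

lemma ks_nmon_le: "nmon (ks n i) \<le> 2 * n + 1"
proof -
  have "nmon (ks n i) \<le> (\<Sum>j\<in>{1..2*n}. nmon (pvar (X i j))) + nmon (const (real n))"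
    unfolding ks_def by (intro order_trans[OF nmon_diff_le] add_mono nmon_sum_le order_refl)
  also have "\<dots> \<le> (\<Sum>j\<in>{1..2*n}. 1) + 1"
    by (intro add_mono sum_mono nmon_pvar_le nmon_const_le)
  finally show ?thesis by simp
qed

lemma length_Qn: "n \<ge> 1 \<Longrightarrow> length (Qn n) = Suc n"
  unfolding Qn_def by simp

lemma Qn_nth_0: "Qn n ! 0 = ks n 1 - const (1/2)"
  unfolding Qn_def by simp

lemma Qn_nth_step: "1 \<le> k \<Longrightarrow> k < n \<Longrightarrow> Qn n ! k = ks n k * ks n k - ks n (Suc k)"
  unfolding Qn_def by (simp add: nth_append less_diff_iff)

lemma Qn_nth_last: "n \<ge> 1 \<Longrightarrow> Qn n ! n = ks n n * ks n n"
  unfolding Qn_def by (simp add: nth_append)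

lemma Qn_deg_le: "q \<in> set (Qn n) \<Longrightarrow> deg_le 2 q"
proof -
  have "deg_le 2 (ks n i)" for i
    by (rule deg_le_mono[OF ks_deg_le]) simp
  then show "q \<in> set (Qn n) \<Longrightarrow> deg_le 2 q"
    using deg_le_mult[OF ks_deg_le ks_deg_le, of n]
    unfolding Qn_def one_add_one by (auto intro!: deg_le_diff deg_le_const)
qed

lemma Qn_nmon_le: "q \<in> set (Qn n) \<Longrightarrow> nmon q \<le> (2 * n + 2)\<^sup>2"
proof -
  have sq: "nmon (ks n i * ks n i) \<le> (2 * n + 1) * (2 * n + 1)" for i
    using nmon_mult_le[of "ks n i" "ks n i"] mult_le_mono[OF ks_nmon_le ks_nmon_le] by (rule le_trans)
  have "nmon (ks n i * ks n i - ks n j) \<le> (2 * n + 1) * (2 * n + 1) + (2 * n + 1)" for i j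
    using nmon_diff_le[of "ks n i * ks n i" "ks n j"] sq[of i] ks_nmon_le[of n j] by linarith
  moreover have "nmon (ks n i - const c) \<le> 2 * n + 2" for i c
    using nmon_diff_le[of "ks n i" "const c"] ks_nmon_le[of n i] nmon_const_le[of c] by linarith
  moreover note sq
  moreover assume "q \<in> set (Qn n)"
  ultimately show ?thesis
    unfolding Qn_def power2_eq_square by (force intro: le_trans)
qed

lemma ax_deg_le: "deg_le 2 (ax_x i j)" "deg_le 2 (ax_xb i j)" "deg_le 2 (ax_c i j)"
  unfolding ax_x_def ax_xb_def ax_c_def one_add_one[symmetric]
  by (intro deg_le_diff deg_le_add deg_le_mult deg_le_pvar deg_le_const
        deg_le_mono[OF deg_le_pvar] le_add1)+

lemma ax_nmon_le: "nmon (ax_x i j) \<le> 2" "nmon (ax_xb i j) \<le> 2" "nmon (ax_c i j) \<le> 3"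
proof -
  have square_minus: "nmon (pvar v * pvar v - pvar v) \<le> 2" for v
    using nmon_diff_le[of "pvar v * pvar v" "pvar v"] nmon_mult_le[of "pvar v" "pvar v"]
      mult_le_mono[OF nmon_pvar_le nmon_pvar_le, of v v] nmon_pvar_le[of v]
    by linarith
  show "nmon (ax_x i j) \<le> 2" "nmon (ax_xb i j) \<le> 2"
    unfolding ax_x_def ax_xb_def by (rule square_minus)+
  show "nmon (ax_c i j) \<le> 3" unfolding ax_c_def
    using nmon_diff_le[of "pvar (X i j) + pvar (XB i j)" "const 1"]
      nmon_add_le[of "pvar (X i j)" "pvar (XB i j)"]
      nmon_pvar_le[of "X i j"] nmon_pvar_le[of "XB i j"] nmon_const_le[of 1]
    by linarith
qed

lemma card_pairs: "card (pairs n) = 2 * n\<^sup>2"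
  unfolding pairs_def by (simp add: card_cartesian_product power2_eq_square)

lemma sos_degree_le_2:
  assumes "\<And>r. r \<in> set rs \<Longrightarrow> deg_le 1 r"
    and "\<And>k. deg_le 0 (t k)"
    and "\<And>i j. deg_le 0 (u i j)" "\<And>i j. deg_le 0 (ub i j)" "\<And>i j. deg_le 0 (w i j)"
  shows "sos_degree n rs t u ub w \<le> 2"
  unfolding sos_degree_def
proof (intro Max.boundedI)
  fix a
  assume "a \<in> {0} \<union> (\<lambda>r. tdeg (r * r)) ` set rs
         \<union> (\<lambda>k. tdeg (t k * Qn n ! k)) ` {..<length (Qn n)}
         \<union> (\<lambda>(i,j). tdeg (u i j * ax_x i j)) ` pairs n
         \<union> (\<lambda>(i,j). tdeg (ub i j * ax_xb i j)) ` pairs n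
         \<union> (\<lambda>(i,j). tdeg (w i j * ax_c i j)) ` pairs n"
  then show "a \<le> 2"
  proof (elim UnE imageE)
    fix r assume "r \<in> set rs" "a = tdeg (r * r)"
    then show ?thesis
      using tdeg_mult_le[OF assms(1) assms(1)] by (simp add: numeral_2_eq_2)
  next
    fix k assume "k \<in> {..<length (Qn n)}" "a = tdeg (t k * Qn n ! k)"
    then show ?thesis
      using tdeg_mult_le[OF assms(2) Qn_deg_le[OF nth_mem]] by (simp add: numeral_2_eq_2)
  qed (use tdeg_mult_le[OF assms(3) ax_deg_le(1)] tdeg_mult_le[OF assms(4) ax_deg_le(2)]
        tdeg_mult_le[OF assms(5) ax_deg_le(3)] in \<open>auto simp: numeral_2_eq_2\<close>)
qed (auto simp: pairs_def)

lemma sum_list_map_le: "(\<And>x. x \<in> set xs \<Longrightarrow> f x \<le> B) \<Longrightarrow> sum_list (map f xs) \<le> length xs * (B::nat)"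
  by (induction xs) (auto simp: add_mono)

lemma sos_size_le:
  assumes "n \<ge> 1"
    and "\<And>r. r \<in> set rs \<Longrightarrow> nmon r \<le> a"
    and "\<And>k. nmon (t k) \<le> b"
    and "\<And>i j. nmon (u i j) \<le> c" "\<And>i j. nmon (ub i j) \<le> c" "\<And>i j. nmon (w i j) \<le> c"
  shows "sos_size n rs t u ub w \<le> length rs * a + (n + 1) * (b + (2 * n + 2)\<^sup>2) + 2 * n\<^sup>2 * (3 * c + 7)"
proof -
  have "(\<Sum>k<length (Qn n). nmon (t k) + nmon (Qn n ! k))
      \<le> of_nat (card {..<length (Qn n)}) * (b + (2 * n + 2)\<^sup>2)"
    by (rule sum_bounded_above) (use assms(3) Qn_nmon_le in \<open>auto intro!: add_mono\<close>)
  moreover have "(\<Sum>(i,j)\<in>pairs n. nmon (u i j) + nmon (ax_x i j) + nmon (ub i j) + nmon (ax_xb i j)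
                      + nmon (w i j) + nmon (ax_c i j)) \<le> of_nat (card (pairs n)) * (3 * c + 7)"
  proof (rule sum_bounded_above)
    fix ij :: "nat \<times> nat"
    obtain i j where "ij = (i, j)" by fastforce
    then show "(case ij of (i, j) \<Rightarrow> nmon (u i j) + nmon (ax_x i j) + nmon (ub i j) + nmon (ax_xb i j)
                      + nmon (w i j) + nmon (ax_c i j)) \<le> 3 * c + 7"
      using assms(4-6)[of i j] ax_nmon_le[of i j] by simp
  qed
  ultimately show ?thesis
    unfolding sos_size_def using sum_list_map_le[of rs nmon a, OF assms(2)]
    by (simp add: length_Qn[OF assms(1)] card_pairs)
qed

subsection \<open>Weights of the refutation\<close>

fun sos_weight :: "nat \<Rightarrow> real" where
  "sos_weight 0 = 1"
| "sos_weight (Suc i) = 2 ^ Suc i * (sos_weight i)\<^sup>2"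

definition sos_center :: "nat \<Rightarrow> real" where
  "sos_center i = sos_weight (i - 1) / (2 * sos_weight i)"

lemma sos_weight_pos: "sos_weight i > 0"
  by (induction i) auto

lemma sos_weight_center: "2 * sos_weight (Suc i) * sos_center (Suc i) = sos_weight i"
  unfolding sos_center_def using sos_weight_pos[of "Suc i"] by simp

lemma sos_weight_center_square: "sos_weight (Suc i) * (sos_center (Suc i))\<^sup>2 = 1 / (4 * 2 ^ Suc i)"
  using sos_weight_pos[of i] unfolding sos_center_def by (simp add: field_simps power2_eq_square)

lemma sum_sos_weight_center_square:
  "(\<Sum>i\<in>{1..m}. sos_weight i * (sos_center i)\<^sup>2) = 1/4 - 1 / (4 * 2 ^ m)"
proof (induction m)
  case (Suc m)
  then show ?case
    by (simp add: sos_weight_center_square field_simps del: sos_weight.simps)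
qed simp

lemma weighted_squares_telescope:
  fixes P b Y :: "nat \<Rightarrow> 'a::comm_ring_1"
  assumes "\<And>i. 2 * P (Suc i) * b (Suc i) = P i"
  shows "(\<Sum>i\<in>{1..m}. P i * ((Y i - b i) * (Y i - b i)))
       = (\<Sum>i\<in>{1..m}. P i * (Y i * Y i - Y (Suc i))) + P m * Y (Suc m) - P 0 * Y 1
         + (\<Sum>i\<in>{1..m}. P i * (b i * b i))"
proof -
  define f where "f i = P (i - 1) * Y i" for i
  have "P i * ((Y i - b i) * (Y i - b i))
      = P i * (Y i * Y i - Y (Suc i)) + (f (Suc i) - f i) + P i * (b i * b i)" if "i \<in> {1..m}" for i
  proof -
    from that obtain j where "i = Suc j" by (cases i) auto
    then show ?thesis
      using assms[of j, symmetric] by (simp add: f_def algebra_simps)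
  qed
  then have "(\<Sum>i\<in>{1..m}. P i * ((Y i - b i) * (Y i - b i)))
      = (\<Sum>i\<in>{1..m}. P i * (Y i * Y i - Y (Suc i))) + (\<Sum>i = 1..m. f (Suc i) - f i)
        + (\<Sum>i\<in>{1..m}. P i * (b i * b i))"
    by (simp add: sum.distrib)
  also have "(\<Sum>i = 1..m. f (Suc i) - f i) = P m * Y (Suc m) - P 0 * Y 1"
    using sum_Suc_diff[of 1 m f] by (simp add: f_def)
  finally show ?thesis
    by (simp add: algebra_simps)
qed

subsection \<open>The certificate\<close>

definition cert_squares :: "nat \<Rightarrow> mpoly list" where
  "cert_squares n =
     map (\<lambda>i. const (sqrt (4 * sos_weight i)) * (ks n i - const (sos_center i))) [1..<Suc n]
     @ [const (sqrt (1 / 2 ^ n))]"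

definition cert_multiplier :: "nat \<Rightarrow> mpoly" where
  "cert_multiplier k = const (if k = 0 then 4 else - 4 * sos_weight k)"

lemma sum_list_cert_squares:
  "sum_list (map (\<lambda>r. r * r) (cert_squares n))
     = 4 * (\<Sum>i\<in>{1..n}. const (sos_weight i) * ((ks n i - const (sos_center i)) * (ks n i - const (sos_center i))))
       + const (1 / 2 ^ n)"
proof -
  have sqrt_square: "const (sqrt x) * const (sqrt x) = const x" if "x \<ge> 0" for x
    using that by (simp flip: const_mult)
  then have "(const (sqrt (4 * sos_weight i)) * p) * (const (sqrt (4 * sos_weight i)) * p)
      = 4 * (const (sos_weight i) * (p * p))" for i p
    using sos_weight_pos[of i] by (simp add: algebra_simps const_mult const_numeral)
  then show ?thesis
    unfolding cert_squares_def
    by (simp add: sqrt_square interv_sum_list_conv_sum_set_nat atLeastLessThanSuc_atLeastAtMost sum_distrib_left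
        del: upt_Suc)
qed

lemma sum_cert_multipliers:
  assumes "n \<ge> 1"
  shows "(\<Sum>k<length (Qn n). cert_multiplier k * Qn n ! k)
       = 4 * (ks n 1 - const (1/2))
         - 4 * (\<Sum>i\<in>{1..n}. const (sos_weight i) * (ks n i * ks n i - (if i < n then ks n (Suc i) else 0)))"
proof -
  have "{..<Suc n} = insert 0 {1..n}" by auto
  moreover have "cert_multiplier k * Qn n ! k
      = - (4 * (const (sos_weight k) * (ks n k * ks n k - (if k < n then ks n (Suc k) else 0))))"
    if "k \<in> {1..n}" for k
    using that Qn_nth_step[of k n] Qn_nth_last[OF assms]
    by (auto simp: cert_multiplier_def const_uminus const_mult const_numeral)
  ultimately show ?thesis
    by (simp add: length_Qn[OF assms] Qn_nth_0 cert_multiplier_def const_numeral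
        sum_distrib_left sum_negf)
qed

lemma sos_refutation_cert:
  assumes "n \<ge> 1"
  shows "sos_refutation n (cert_squares n) cert_multiplier (\<lambda>_ _. 0) (\<lambda>_ _. 0) (\<lambda>_ _. 0)"
proof -
  define Y where "Y i = (if i \<le> n then ks n i else 0)" for i
  let ?P = "\<lambda>i. const (sos_weight i)" and ?b = "\<lambda>i. const (sos_center i)"
  let ?C = "const (1/4 - 1 / (4 * 2 ^ n))"
  have step: "2 * ?P (Suc i) * ?b (Suc i) = ?P i" for i
    using arg_cong[OF sos_weight_center, of const] by (simp only: const_mult const_numeral)
  have "(\<Sum>i\<in>{1..n}. ?P i * ((ks n i - ?b i) * (ks n i - ?b i)))
      = (\<Sum>i\<in>{1..n}. ?P i * ((Y i - ?b i) * (Y i - ?b i)))"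
    by (rule sum.cong) (auto simp: Y_def)
  also have "\<dots> = (\<Sum>i\<in>{1..n}. ?P i * (Y i * Y i - Y (Suc i))) + ?P n * Y (Suc n) - ?P 0 * Y 1
      + (\<Sum>i\<in>{1..n}. ?P i * (?b i * ?b i))"
    by (rule weighted_squares_telescope[of ?P ?b, OF step])
  also have "(\<Sum>i\<in>{1..n}. ?P i * (?b i * ?b i)) = ?C"
    unfolding sum_sos_weight_center_square[symmetric] const_sum
    by (simp add: const_mult power2_eq_square)
  also have "(\<Sum>i\<in>{1..n}. ?P i * (Y i * Y i - Y (Suc i)))
      = (\<Sum>i\<in>{1..n}. ?P i * (ks n i * ks n i - (if i < n then ks n (Suc i) else 0)))"
    by (rule sum.cong) (auto simp: Y_def)
  finally have telescope:
    "(\<Sum>i\<in>{1..n}. ?P i * ((ks n i - ?b i) * (ks n i - ?b i)))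
      = (\<Sum>i\<in>{1..n}. ?P i * (ks n i * ks n i - (if i < n then ks n (Suc i) else 0))) - ks n 1 + ?C"
    using assms by (simp add: Y_def const_1)
  have "const (4 * (1/4 - 1 / (4 * 2 ^ n)) + 1 / 2 ^ n - 4 * (1/2)) = const (- 1)"
    by simp
  then have "4 * ?C + const (1 / 2 ^ n) - 4 * const (1/2) = - 1"
    by (simp only: const_add const_diff const_mult const_numeral const_uminus const_1)
  then show ?thesis
    unfolding sos_refutation_def sum_list_cert_squares sum_cert_multipliers[OF assms] telescope
    by (simp add: const_1 algebra_simps)
qed

lemma cert_squares_deg_le: "r \<in> set (cert_squares n) \<Longrightarrow> deg_le 1 r"
  using deg_le_mult[OF deg_le_const deg_le_diff[OF ks_deg_le deg_le_const]]
  unfolding cert_squares_def by (auto simp: deg_le_const)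

lemma nmon_cert_squares_le:
  assumes "r \<in> set (cert_squares n)"
  shows "nmon r \<le> 2 * n + 2"
proof -
  have "nmon (const c * (ks n i - const d)) \<le> 2 * n + 2" for c d i
  proof -
    have "nmon (const c * (ks n i - const d)) \<le> 1 * (nmon (ks n i) + 1)"
      by (intro order_trans[OF nmon_mult_le] mult_le_mono nmon_const_le
          order_trans[OF nmon_diff_le] add_mono order_refl)
    then show ?thesis
      using ks_nmon_le[of n i] by simp
  qed
  then show ?thesis
    using assms unfolding cert_squares_def by (auto intro: le_trans[OF nmon_const_le])
qed

lemma sos_size_cert_le:
  assumes "n \<ge> 1"
  shows "sos_size n (cert_squares n) cert_multiplier (\<lambda>_ _. 0) (\<lambda>_ _. 0) (\<lambda>_ _. 0) \<le> 64 * n ^ 3"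
proof -
  have "sos_size n (cert_squares n) cert_multiplier (\<lambda>_ _. 0) (\<lambda>_ _. 0) (\<lambda>_ _. 0)
      \<le> length (cert_squares n) * (2 * n + 2) + (n + 1) * (1 + (2 * n + 2)\<^sup>2) + 2 * n\<^sup>2 * (3 * 0 + 7)"
    by (rule sos_size_le[OF assms nmon_cert_squares_le])
      (simp_all only: cert_multiplier_def nmon_const_le nmon_zero order_refl)
  also have "\<dots> = 4 * (n * n * n) + 28 * (n * n) + 17 * n + 7"
    by (simp add: cert_squares_def power2_eq_square algebra_simps)
  also have "\<dots> \<le> 64 * n ^ 3"
  proof -
    have sq: "1 \<le> n * n" using assms by simp
    have "n * n * 1 \<le> n * n * n" using assms by (rule mult_le_mono2)
    moreover have "1 * n \<le> n * n * n" using sq by (rule mult_le_mono1)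
    ultimately show ?thesis
      unfolding power3_eq_cube using sq by linarith
  qed
  finally show ?thesis .
qed

theorem lemma6:
  shows "\<exists>(c::nat) (d::nat). \<forall>n\<ge>1. \<exists>rs t u ub w.
           sos_refutation n rs t u ub w \<and>
           sos_degree n rs t u ub w \<le> 2 \<and>
           sos_size n rs t u ub w \<le> c * n ^ d"
proof (rule exI[of _ 64], rule exI[of _ 3], intro allI impI)
  fix n :: nat
  assume n: "n \<ge> 1"
  have "sos_degree n (cert_squares n) cert_multiplier (\<lambda>_ _. 0) (\<lambda>_ _. 0) (\<lambda>_ _. 0) \<le> 2"
    by (intro sos_degree_le_2 cert_squares_deg_le) (auto simp: cert_multiplier_def deg_le_const deg_le_zero)
  with sos_refutation_cert[OF n] sos_size_cert_le[OF n]
  show "\<exists>rs t u ub w. sos_refutation n rs t u ub w \<and> sos_degree n rs t u ub w \<le> 2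
      \<and> sos_size n rs t u ub w \<le> 64 * n ^ 3"
    by blast
qed

end
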